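(* Let $v_1\ge\cdots\ge v_n>0$, $1\ge q_1\ge\cdots\ge q_n\ge 0$, and $a=(a_1,\dots,a_n)\in(0,\infty)^n$. For $b\in(0,\infty)^n$ put $\lambda(b)=\frac{\sum_i v_i b_i q_i}{\sum_i v_i b_i}$, let $S=\sum_i v_i a_i$, and let $e_j$ be the $j$-th unit vector. Then $$\sum_{j=1}^n \frac{v_j a_j q_j}{S}\,\lambda(a+e_j)\;+\;\Big(1-\sum_{j=1}^n\frac{v_j a_j q_j}{S}\Big)\lambda(a)\;\ge\;\lambda(a).$$ Equivalently, in the dynamic trial-offer market under the quality ranking with social influence, for every step $t$ the conditional probability (given the history up to step $t$) of a purchase at step $t+1$ is at least the conditional probability of a purchase at step $t$; hence the expected number of purchases per step is non-decreasing in $t$.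
   Context: Dynamic trial-offer market with social influence under the quality ranking: products $1,\dots,n$ with initial appeals $A_i>0$, qualities $1\ge q_1\ge\cdots\ge q_n\ge0$, and product $i$ permanently displayed in position $i$ with visibility $v_i$, where $v_1\ge\cdots\ge v_n>0$. Let $d_{i,t}$ be the number of purchases of product $i$ before step $t$ ($d_{i,1}=0$) and $a_{i,t}=A_i+d_{i,t}$. At step $t$ one participant tries product $i$ with probability $\frac{v_i a_{i,t}}{\sum_j v_j a_{j,t}}$, then purchases it with probability $q_i$ (independently); if purchased, $d_{i,t+1}=d_{i,t}+1$, and all other counts are unchanged. The probability of a purchase at step $t$, given the history, is $\lambda(a_{\cdot,t})$. *)

theory Defs
  imports "HOL-Analysis.Analysis"
begin

definition purchase_prob :: "nat \<Rightarrow> (nat \<Rightarrow> real) \<Rightarrow> (nat \<Rightarrow> real) \<Rightarrow> (nat \<Rightarrow> real) \<Rightarrow> real" where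
  "purchase_prob n v q b = (\<Sum>i=1..n. v i * b i * q i) / (\<Sum>i=1..n. v i * b i)"

definition unit_vec :: "nat \<Rightarrow> nat \<Rightarrow> real" where
  "unit_vec j = (\<lambda>i. if i = j then 1 else 0)"

end

theory Submission
  imports Defs
begin

text \<open>
  Write \<open>w\<^sub>i = v\<^sub>i a\<^sub>i\<close>, \<open>S = \<Sum> w\<^sub>i\<close>, \<open>N = \<Sum> w\<^sub>i q\<^sub>i\<close>, so that \<open>\<lambda>(a) = N/S\<close>. A purchase of product \<open>j\<close>
  moves the ratio to \<open>(N + v\<^sub>j q\<^sub>j)/(S + v\<^sub>j) = \<lambda>(a) + g\<^sub>j (q\<^sub>j - \<lambda>(a))\<close> with
  \<open>g\<^sub>j = v\<^sub>j/(S + v\<^sub>j)\<close>, so the left-hand side exceeds \<open>\<lambda>(a)\<close> by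
  \<open>S\<^sup>-\<^sup>1 \<Sum> w\<^sub>j c\<^sub>j (q\<^sub>j - \<lambda>(a))\<close> with \<open>c\<^sub>j = q\<^sub>j g\<^sub>j\<close>. Since \<open>g\<close> is an increasing function
  of \<open>v\<close>, the sequences \<open>c\<close> and \<open>q\<close> are similarly ordered whenever \<open>v\<close> and \<open>q\<close> are, as under
  the quality ranking; the weighted Chebyshev sum inequality then makes this excess nonnegative.
\<close>

lemma weighted_Chebyshev_sum_lower:
  fixes w x y :: "'i \<Rightarrow> 'a::linordered_idom"
  assumes "finite I"
    and "\<And>i. i \<in> I \<Longrightarrow> 0 \<le> w i"
    and "\<And>i j. i \<in> I \<Longrightarrow> j \<in> I \<Longrightarrow> 0 \<le> (x i - x j) * (y i - y j)"
  shows "(\<Sum>i\<in>I. w i * x i) * (\<Sum>i\<in>I. w i * y i) \<le> (\<Sum>i\<in>I. w i) * (\<Sum>i\<in>I. w i * x i * y i)"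
proof -
  have "0 \<le> (\<Sum>i\<in>I. \<Sum>j\<in>I. w i * w j * ((x i - x j) * (y i - y j)))"
    using assms by (intro sum_nonneg) simp
  also have "\<dots> = (\<Sum>i\<in>I. \<Sum>j\<in>I. (w i * x i * y i) * w j) + (\<Sum>i\<in>I. \<Sum>j\<in>I. w i * (w j * x j * y j))
      - (\<Sum>i\<in>I. \<Sum>j\<in>I. (w i * x i) * (w j * y j)) - (\<Sum>i\<in>I. \<Sum>j\<in>I. (w i * y i) * (w j * x j))"
    by (simp add: algebra_simps sum.distrib sum_subtractf)
  also have "\<dots> = 2 * ((\<Sum>i\<in>I. w i) * (\<Sum>i\<in>I. w i * x i * y i) - (\<Sum>i\<in>I. w i * x i) * (\<Sum>i\<in>I. w i * y i))"
    by (simp add: sum_product[symmetric])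
  finally show ?thesis by simp
qed

lemma comonotone_mono_on_comp:
  fixes f :: "'a::linorder \<Rightarrow> 'b::linordered_idom" and x y :: 'a and p p' :: "'b"
  assumes "mono_on A f" "x \<in> A" "y \<in> A"
    and "x < y \<Longrightarrow> p \<le> p'" "y < x \<Longrightarrow> p' \<le> p"
  shows "0 \<le> (f x - f y) * (p - p')"
  using assms by (cases x y rule: linorder_cases) (auto simp: mono_on_def mult_nonpos_nonpos)

lemma comonotone_mult:
  fixes p p' g g' :: "'a::linordered_idom"
  assumes "0 \<le> p" "0 \<le> p'" "0 \<le> g" "0 \<le> g'" "0 \<le> (g - g') * (p - p')"
  shows "0 \<le> (p * g - p' * g') * (p - p')"
  using assms
  by (cases p p' rule: linorder_cases) (auto simp: mult_le_0_iff zero_le_mult_iff intro: mult_mono)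

lemma ratio_after_random_reinforcement_ge:
  fixes w v q :: "'i \<Rightarrow> real"
  assumes "finite I"
    and w_nonneg: "\<And>i. i \<in> I \<Longrightarrow> 0 \<le> w i"
    and v_pos: "\<And>i. i \<in> I \<Longrightarrow> 0 < v i"
    and q_nonneg: "\<And>i. i \<in> I \<Longrightarrow> 0 \<le> q i"
    and comonotone: "\<And>i j. i \<in> I \<Longrightarrow> j \<in> I \<Longrightarrow> 0 \<le> (v i - v j) * (q i - q j)"
    and S_pos: "0 < (\<Sum>i\<in>I. w i)"
  defines "S \<equiv> \<Sum>i\<in>I. w i" and "N \<equiv> \<Sum>i\<in>I. w i * q i"
  shows "N / S \<le> (\<Sum>j\<in>I. w j * q j / S * ((N + v j * q j) / (S + v j)))
                   + (1 - (\<Sum>j\<in>I. w j * q j / S)) * (N / S)"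
proof -
  define g where "g j = v j / (S + v j)" for j
  define c where "c j = q j * g j" for j
  have S: "0 < S" using S_pos by (simp add: S_def)
  have update: "(N + v j * q j) / (S + v j) = N / S + g j * (q j - N / S)" if "j \<in> I" for j
  proof -
    have "S + v j \<noteq> 0" using S v_pos[OF that] by linarith
    with S show ?thesis by (simp add: g_def divide_simps) (simp add: algebra_simps)
  qed
  have g_mono: "mono_on {0<..} (\<lambda>t. t / (S + t))"
    using S by (auto intro!: mono_onI simp: field_simps)
  have "0 \<le> (g i - g j) * (q i - q j)" if "i \<in> I" "j \<in> I" for i j
    unfolding g_def using v_pos[OF that(1)] v_pos[OF that(2)] comonotone[OF that]
    by (intro comonotone_mono_on_comp[OF g_mono]) (auto simp: zero_le_mult_iff)
  then have "0 \<le> (c i - c j) * (q i - q j)" if "i \<in> I" "j \<in> I" for i j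
    unfolding c_def using that q_nonneg v_pos[OF that(1)] v_pos[OF that(2)] S
    by (intro comonotone_mult) (auto simp: g_def)
  then have Chebyshev: "(\<Sum>i\<in>I. w i * c i) * N \<le> S * (\<Sum>i\<in>I. w i * c i * q i)"
    unfolding S_def N_def using \<open>finite I\<close> w_nonneg by (intro weighted_Chebyshev_sum_lower)
  have "(\<Sum>j\<in>I. w j * q j / S * ((N + v j * q j) / (S + v j)))
          + (1 - (\<Sum>j\<in>I. w j * q j / S)) * (N / S) - N / S
        = (\<Sum>j\<in>I. w j * q j / S * ((N + v j * q j) / (S + v j) - N / S))"
    by (simp add: right_diff_distrib left_diff_distrib sum_subtractf sum_distrib_right
        diff_divide_distrib sum_divide_distrib)
  also have "\<dots> = (\<Sum>j\<in>I. w j * q j / S * (g j * (q j - N / S)))"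
    by (rule sum.cong) (simp_all add: update)
  also have "\<dots> = (\<Sum>j\<in>I. (S * (w j * c j * q j) - w j * c j * N) / S\<^sup>2)"
    using S by (intro sum.cong) (simp_all add: c_def field_simps power2_eq_square)
  also have "\<dots> = (S * (\<Sum>i\<in>I. w i * c i * q i) - (\<Sum>i\<in>I. w i * c i) * N) / S\<^sup>2"
    by (simp add: sum_divide_distrib[symmetric] sum_subtractf sum_distrib_left sum_distrib_right)
  also have "\<dots> \<ge> 0" using Chebyshev by simp
  finally show ?thesis by simp
qed

lemma purchase_prob_add_unit_vec:
  assumes "j \<in> {1..n}"
  shows "purchase_prob n v q (\<lambda>i. a i + unit_vec j i)
           = ((\<Sum>i=1..n. v i * a i * q i) + v j * q j) / ((\<Sum>i=1..n. v i * a i) + v j)"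
proof -
  have "(\<Sum>i=1..n. v i * (a i + unit_vec j i) * q i)
          = (\<Sum>i=1..n. v i * a i * q i + (if i = j then v j * q j else 0))"
    "(\<Sum>i=1..n. v i * (a i + unit_vec j i)) = (\<Sum>i=1..n. v i * a i + (if i = j then v j else 0))"
    by (auto intro!: sum.cong simp: unit_vec_def algebra_simps)
  then show ?thesis
    using assms by (simp add: purchase_prob_def sum.distrib)
qed

theorem mainTheorem3:
  fixes n :: nat and v q a :: "nat \<Rightarrow> real"
  assumes "n \<ge> 1"
    and v_mono: "\<And>i j. 1 \<le> i \<Longrightarrow> i \<le> j \<Longrightarrow> j \<le> n \<Longrightarrow> v j \<le> v i"
    and v_pos: "\<And>i. 1 \<le> i \<Longrightarrow> i \<le> n \<Longrightarrow> v i > 0"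
    and q_mono: "\<And>i j. 1 \<le> i \<Longrightarrow> i \<le> j \<Longrightarrow> j \<le> n \<Longrightarrow> q j \<le> q i"
    and q_le1: "\<And>i. 1 \<le> i \<Longrightarrow> i \<le> n \<Longrightarrow> q i \<le> 1"
    and q_nonneg: "\<And>i. 1 \<le> i \<Longrightarrow> i \<le> n \<Longrightarrow> q i \<ge> 0"
    and a_pos: "\<And>i. 1 \<le> i \<Longrightarrow> i \<le> n \<Longrightarrow> a i > 0"
  shows "(let S = (\<Sum>i=1..n. v i * a i) in
           (\<Sum>j=1..n. (v j * a j * q j / S) * purchase_prob n v q (\<lambda>i. a i + unit_vec j i))
           + (1 - (\<Sum>j=1..n. v j * a j * q j / S)) * purchase_prob n v q a)
         \<ge> purchase_prob n v q a"
proof -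
  have comonotone: "0 \<le> (v i - v j) * (q i - q j)" if "i \<in> {1..n}" "j \<in> {1..n}" for i j
    using that v_mono[of i j] q_mono[of i j] v_mono[of j i] q_mono[of j i]
    by (cases "i \<le> j") (auto intro: mult_nonpos_nonpos)
  let ?S = "\<Sum>i=1..n. v i * a i" and ?N = "\<Sum>i=1..n. v i * a i * q i"
  have "0 < ?S"
    using \<open>n \<ge> 1\<close> v_pos a_pos by (intro sum_pos) auto
  then have "?N / ?S \<le> (\<Sum>j=1..n. v j * a j * q j / ?S * ((?N + v j * q j) / (?S + v j)))
                          + (1 - (\<Sum>j=1..n. v j * a j * q j / ?S)) * (?N / ?S)"
    using v_pos a_pos q_nonneg comonotone
    by (intro ratio_after_random_reinforcement_ge) (auto intro: mult_nonneg_nonneg less_imp_le)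
  moreover have "purchase_prob n v q a = ?N / ?S"
    by (simp add: purchase_prob_def)
  moreover have "(\<Sum>j=1..n. v j * a j * q j / ?S * purchase_prob n v q (\<lambda>i. a i + unit_vec j i))
      = (\<Sum>j=1..n. v j * a j * q j / ?S * ((?N + v j * q j) / (?S + v j)))"
    by (intro sum.cong) (simp_all add: purchase_prob_add_unit_vec)
  ultimately show ?thesis
    unfolding Let_def by simp
qed

end
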